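(* Let $w_0\in\mathbb{R}^p$ be such that for every hidden neuron $(l,i)$ ($1\le l\le L$, $1\le i\le n_l$) the function $x\mapsto z_l(x;w_0)_i$ does not vanish identically on any nonempty open subset of $\mathbb{R}^{n_0}$. Then the set $Z=\bigcup_{l=1}^{L}\bigcup_{i=1}^{n_l}\{x\in\mathbb{R}^{n_0}: z_l(x;w_0)_i=0\}$ has Lebesgue measure zero in $\mathbb{R}^{n_0}$.
   Context: A ReLU multilayer perceptron (MLP) with $L$ hidden layers and widths $n_0,n_1,\dots,n_L,n_{L+1}$ has parameters $w=(W_0,b_0,W_1,b_1,\dots,W_L,b_L)\in\mathbb{R}^p$ with $W_l\in\mathbb{R}^{n_{l+1}\times n_l}$, $b_l\in\mathbb{R}^{n_{l+1}}$ (all entries concatenated into one vector of length $p$). For $x\in\mathbb{R}^{n_0}$ set $h_0(x;w)=x$ and for $l=1,\dots,L$ define the pre-activations $z_l(x;w)=W_{l-1}h_{l-1}(x;w)+b_{l-1}\in\mathbb{R}^{n_l}$ and activations $h_l(x;w)=\sigma(z_l(x;w))$, where $\sigma(t)=\max(t,0)$ is applied elementwise; the output is $f(x;w)=W_Lh_L(x;w)+b_L$. *)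

theory Defs
  imports "HOL-Analysis.Analysis"
begin

text \<open>The input space R^{n_0} is the type real^'n,
  so n_0 = CARD('n).  The parameters are:
   W0 i j  (i < n_1, j :: 'n)   -- entries of W_0;
   W l i j (1 \<le> l \<le> L, i < n_{l+1}, j < n_l) -- entries of W_l;
   b l i   (0 \<le> l \<le> L, i < n_{l+1})      -- entries of b_l.
  Hidden neurons are indexed from 0: neuron (l,i) with i < n l.
  mlp_pre n W0 W b l x i = z_l(x;w)_i for 1 \<le> l.\<close>

fun mlp_pre :: "(nat \<Rightarrow> nat) \<Rightarrow> (nat \<Rightarrow> 'n::finite \<Rightarrow> real) \<Rightarrow> (nat \<Rightarrow> nat \<Rightarrow> nat \<Rightarrow> real)
      \<Rightarrow> (nat \<Rightarrow> nat \<Rightarrow> real) \<Rightarrow> nat \<Rightarrow> real^'n \<Rightarrow> nat \<Rightarrow> real" where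
  "mlp_pre n W0 W b 0 x i = 0"
| "mlp_pre n W0 W b (Suc 0) x i = (\<Sum>j\<in>UNIV. W0 i j * x $ j) + b 0 i"
| "mlp_pre n W0 W b (Suc (Suc l)) x i =
     (\<Sum>j<n (Suc l). W (Suc l) i j * max (mlp_pre n W0 W b (Suc l) x j) 0) + b (Suc l) i"

end

theory Submission
  imports Defs
begin

text \<open>Every pre-activation agrees at each input with one of finitely many affine functions,
  because sums, scalar multiples and the ReLU preserve this property. If such a continuous function
  vanishes at a point lying on none of the hyperplanes where its non-zero affine pieces vanish, it
  differs from every non-zero piece on a neighbourhood of that point and so vanishes there. Hence,
  when no pre-activation vanishes on an open set, each neuron's zero set lies in finitely many
  hyperplanes; being closed, it is a Borel null set, and so is the finite union over all neurons.\<close>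

definition piecewise_affine :: "('a::real_inner \<Rightarrow> real) \<Rightarrow> bool" where
  "piecewise_affine f \<longleftrightarrow> (\<exists>F. finite F \<and> (\<forall>x. \<exists>(a, c)\<in>F. f x = a \<bullet> x + c))"

lemma piecewise_affineI:
  assumes "finite F" "\<And>x. \<exists>(a, c)\<in>F. f x = a \<bullet> x + c"
  shows "piecewise_affine f"
  using assms unfolding piecewise_affine_def by blast

lemma piecewise_affine_affine: "piecewise_affine (\<lambda>x. a \<bullet> x + c)"
  by (rule piecewise_affineI[of "{(a, c)}"]) auto

lemma piecewise_affine_const: "piecewise_affine (\<lambda>x. c)"
  using piecewise_affine_affine[of 0 c] by simp

lemma piecewise_affine_add:
  assumes "piecewise_affine f" "piecewise_affine g"
  shows "piecewise_affine (\<lambda>x. f x + g x)"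
proof -
  obtain F where F: "finite F" "\<And>x. \<exists>(a, c)\<in>F. f x = a \<bullet> x + c"
    using assms(1) unfolding piecewise_affine_def by blast
  obtain G where G: "finite G" "\<And>x. \<exists>(a, c)\<in>G. g x = a \<bullet> x + c"
    using assms(2) unfolding piecewise_affine_def by blast
  show ?thesis
  proof (rule piecewise_affineI[of "(\<lambda>((a, c), (a', c')). (a + a', c + c')) ` (F \<times> G)"])
    fix x
    obtain a c a' c' where "(a, c) \<in> F" "f x = a \<bullet> x + c" "(a', c') \<in> G" "g x = a' \<bullet> x + c'"
      using F(2)[of x] G(2)[of x] by blast
    then show "\<exists>(a, c)\<in>(\<lambda>((a, c), (a', c')). (a + a', c + c')) ` (F \<times> G). f x + g x = a \<bullet> x + c"
      by (intro bexI[of _ "(a + a', c + c')"] rev_image_eqI[of "((a, c), (a', c'))"])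
        (auto simp: inner_add_left)
  qed (use F G in auto)
qed

lemma piecewise_affine_scale:
  assumes "piecewise_affine f"
  shows "piecewise_affine (\<lambda>x. r * f x)"
proof -
  obtain F where F: "finite F" "\<And>x. \<exists>(a, c)\<in>F. f x = a \<bullet> x + c"
    using assms unfolding piecewise_affine_def by blast
  show ?thesis
  proof (rule piecewise_affineI[of "(\<lambda>(a, c). (r *\<^sub>R a, r * c)) ` F"])
    fix x
    obtain a c where "(a, c) \<in> F" "f x = a \<bullet> x + c"
      using F(2)[of x] by blast
    then show "\<exists>(a, c)\<in>(\<lambda>(a, c). (r *\<^sub>R a, r * c)) ` F. r * f x = a \<bullet> x + c"
      by (intro bexI[of _ "(r *\<^sub>R a, r * c)"] rev_image_eqI[of "(a, c)"])
        (auto simp: algebra_simps)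
  qed (use F in auto)
qed

lemma piecewise_affine_relu:
  assumes "piecewise_affine f"
  shows "piecewise_affine (\<lambda>x. max (f x) 0)"
proof -
  obtain F where F: "finite F" "\<And>x. \<exists>(a, c)\<in>F. f x = a \<bullet> x + c"
    using assms unfolding piecewise_affine_def by blast
  show ?thesis
  proof (rule piecewise_affineI[of "insert (0, 0) F"])
    fix x
    show "\<exists>(a, c)\<in>insert (0, 0) F. max (f x) 0 = a \<bullet> x + c"
      using F(2)[of x] by (cases "f x \<ge> 0") (auto simp: max_def)
  qed (use F in auto)
qed

lemma piecewise_affine_sum:
  assumes "finite S" "\<And>j. j \<in> S \<Longrightarrow> piecewise_affine (f j)"
  shows "piecewise_affine (\<lambda>x. \<Sum>j\<in>S. f j x)"
  using assms
  by (induction S rule: finite_induct) (auto intro: piecewise_affine_const piecewise_affine_add)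

lemma negligible_zero_set_piecewise_affine:
  fixes f :: "'a::euclidean_space \<Rightarrow> real"
  assumes pa: "piecewise_affine f" and cont: "continuous_on UNIV f"
    and nonvanishing: "\<And>U. open U \<Longrightarrow> U \<noteq> {} \<Longrightarrow> \<exists>x\<in>U. f x \<noteq> 0"
  shows "negligible {x. f x = 0}"
proof -
  obtain F where F: "finite F" "\<And>x. \<exists>(a, c)\<in>F. f x = a \<bullet> x + c"
    using pa unfolding piecewise_affine_def by blast
  define pieces where "pieces = F - {(0, 0)}"
  define hyperplanes where "hyperplanes = (\<lambda>(a, c). {x. a \<bullet> x = - c}) ` pieces"
  have "negligible (\<Union>hyperplanes)"
  proof (rule negligible_Union)
    show "finite hyperplanes"
      using F(1) by (simp add: hyperplanes_def pieces_def)
  next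
    fix T assume "T \<in> hyperplanes"
    then obtain a c where "(a, c) \<in> pieces" "T = {x. a \<bullet> x = - c}"
      unfolding hyperplanes_def by auto
    then show "negligible T"
      by (auto simp: pieces_def intro: negligible_hyperplane)
  qed
  moreover have "{x. f x = 0} \<subseteq> \<Union>hyperplanes"
  proof (rule subsetI, rule ccontr)
    fix x assume "x \<in> {x. f x = 0}" "x \<notin> \<Union>hyperplanes"
    then have off: "f x \<noteq> a \<bullet> x + c" if "(a, c) \<in> pieces" for a c
      using that by (force simp: hyperplanes_def)
    define V where "V = (\<Inter>(a, c)\<in>pieces. {y. f y \<noteq> a \<bullet> y + c})"
    have "open V"
      unfolding V_def using F(1) cont
      by (auto simp: pieces_def intro!: open_INT open_Collect_neq continuous_intros)
    moreover have "x \<in> V"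
      using off by (auto simp: V_def)
    moreover have "f y = 0" if "y \<in> V" for y
      using F(2)[of y] that by (force simp: V_def pieces_def)
    ultimately show False
      using nonvanishing by blast
  qed
  ultimately show ?thesis
    by (rule negligible_subset)
qed

lemma closed_negligible_imp_null_sets_lborel:
  fixes S :: "'a::euclidean_space set"
  assumes "closed S" "negligible S"
  shows "S \<in> null_sets lborel"
proof -
  have "S \<in> sets lborel"
    using assms(1) by simp
  then show ?thesis
    using assms(2) by (simp add: negligible_iff_null_sets null_sets_completion_iff)
qed

lemma piecewise_affine_mlp_pre:
  fixes W0 :: "nat \<Rightarrow> 'n::finite \<Rightarrow> real"
  shows "piecewise_affine (\<lambda>x. mlp_pre n W0 W b l x i)"
  \<comment> \<open>the input point required by the induction rule is irrelevant, so any will do\<close>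
proof (induction n W0 W b l "0 :: real^'n" i rule: mlp_pre.induct)
  case (2 n W0 W b i)
  have "(\<lambda>x. mlp_pre n W0 W b (Suc 0) x i) = (\<lambda>x. (\<chi> j. W0 i j) \<bullet> x + b 0 i)"
    by (auto simp: inner_vec_def)
  then show ?case
    by (simp add: piecewise_affine_affine)
next
  case (3 n W0 W b l i)
  then show ?case
    by (auto intro!: piecewise_affine_add piecewise_affine_sum piecewise_affine_scale
        piecewise_affine_relu piecewise_affine_const)
qed (simp add: piecewise_affine_const)

lemma continuous_on_mlp_pre:
  fixes W0 :: "nat \<Rightarrow> 'n::finite \<Rightarrow> real"
  shows "continuous_on UNIV (\<lambda>x. mlp_pre n W0 W b l x i)"
  by (induction n W0 W b l "0 :: real^'n" i rule: mlp_pre.induct) (auto intro!: continuous_intros)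

theorem mainTheorem3:
  fixes n :: "nat \<Rightarrow> nat" and L :: nat
    and W0 :: "nat \<Rightarrow> 'n::finite \<Rightarrow> real"
    and W :: "nat \<Rightarrow> nat \<Rightarrow> nat \<Rightarrow> real" and b :: "nat \<Rightarrow> nat \<Rightarrow> real"
  assumes "n 0 = CARD('n)"
    and "\<forall>l\<in>{1..L}. \<forall>i<n l. \<forall>U::(real^'n) set. open U \<and> U \<noteq> {} \<longrightarrow>
           \<not> (\<forall>x\<in>U. mlp_pre n W0 W b l x i = 0)"
  shows "(\<Union>l\<in>{1..L}. \<Union>i\<in>{..<n l}. {x::real^'n. mlp_pre n W0 W b l x i = 0}) \<in> null_sets lborel"
proof (intro null_sets_UN' countable_finite finite_atLeastAtMost finite_lessThan)
  fix l i assume "l \<in> {1..L}" "i \<in> {..<n l}"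
  then have "\<exists>x\<in>U. mlp_pre n W0 W b l x i \<noteq> 0" if "open U" "U \<noteq> {}" for U :: "(real^'n) set"
    using assms(2) that by blast
  then have "negligible {x::real^'n. mlp_pre n W0 W b l x i = 0}"
    by (intro negligible_zero_set_piecewise_affine piecewise_affine_mlp_pre continuous_on_mlp_pre)
  moreover have "closed {x::real^'n. mlp_pre n W0 W b l x i = 0}"
    by (intro closed_Collect_eq continuous_on_mlp_pre continuous_intros)
  ultimately show "{x::real^'n. mlp_pre n W0 W b l x i = 0} \<in> null_sets lborel"
    by (intro closed_negligible_imp_null_sets_lborel)
qed

end
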